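(* Let $n\geq2$ be finite and $\mathfrak A\in SA_n$. Then the canonical extension $\mathfrak A^+$ of $\mathfrak A$ is completely representable.
   Context: $SA_n=\mathbf{Mod}(\Sigma'_n)$, where $\Sigma'_n$ (signature $\wedge,-,s^i_j,s_{ij}$, $i\neq j<n$) consists of the Boolean axioms, equations saying each $s^i_j,s_{ij}$ is a Boolean endomorphism, and $t_1(x)=t_2(x)$ for all words $t_1,t_2$ with the same associated map in ${}^nn$ (words map to compositions of the transpositions $[i,j]$ and replacements $[i/j]$, where $[i/j]$ sends $i$ to $j$ and fixes the rest). The canonical extension $\mathfrak A^+$ is the complex algebra of the ultrafilter frame of $\mathfrak A$: universe $\mathcal P(\mathrm{Uf}\mathfrak A)$, and for each unary operator $f$, $f^+(Y)=\{u\in\mathrm{Uf}\mathfrak A:\exists w\in Y\ \forall b\in w\ f(b)\in u\}$. $\mathfrak B$ is completely representable if there is an injective homomorphism $g:\mathfrak B\to\wp(D)$ with $D$ dipermutable (closed under $s\mapsto s\circ[i/j]$ and $s\mapsto s\circ[i,j]$) and $g(\prod Y)=\bigcap g[Y]$ whenever $\prod Y$ exists; $\wp(D)$ carries $\cap$, complement relative to $D$, $S^i_j(X)=\{q\in D:q\circ[i/j]\in X\}$, $S_{ij}(X)=\{q\in D:q\circ[i,j]\in X\}$. *)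

theory Defs
  imports Main "HOL-Library.FuncSet"
begin

record 'a sa_alg =
  sa_carrier :: "'a set"
  sa_meet :: "'a \<Rightarrow> 'a \<Rightarrow> 'a"
  sa_cmp :: "'a \<Rightarrow> 'a"
  sa_sub :: "nat \<Rightarrow> nat \<Rightarrow> 'a \<Rightarrow> 'a"
  sa_swp :: "nat \<Rightarrow> nat \<Rightarrow> 'a \<Rightarrow> 'a"

definition sa_join :: "'a sa_alg \<Rightarrow> 'a \<Rightarrow> 'a \<Rightarrow> 'a" where
  "sa_join A x y = sa_cmp A (sa_meet A (sa_cmp A x) (sa_cmp A y))"

definition sa_le :: "'a sa_alg \<Rightarrow> 'a \<Rightarrow> 'a \<Rightarrow> bool" where
  "sa_le A x y \<longleftrightarrow> sa_meet A x y = x"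

definition boolean_alg :: "'a sa_alg \<Rightarrow> bool" where
  "boolean_alg A \<longleftrightarrow>
     sa_carrier A \<noteq> {} \<and>
     (\<forall>x\<in>sa_carrier A. \<forall>y\<in>sa_carrier A. sa_meet A x y \<in> sa_carrier A) \<and>
     (\<forall>x\<in>sa_carrier A. sa_cmp A x \<in> sa_carrier A) \<and>
     (\<forall>x\<in>sa_carrier A. \<forall>y\<in>sa_carrier A. sa_meet A x y = sa_meet A y x) \<and>
     (\<forall>x\<in>sa_carrier A. \<forall>y\<in>sa_carrier A. sa_join A x y = sa_join A y x) \<and>
     (\<forall>x\<in>sa_carrier A. \<forall>y\<in>sa_carrier A. \<forall>z\<in>sa_carrier A.
        sa_meet A (sa_meet A x y) z = sa_meet A x (sa_meet A y z)) \<and>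
     (\<forall>x\<in>sa_carrier A. \<forall>y\<in>sa_carrier A. \<forall>z\<in>sa_carrier A.
        sa_join A (sa_join A x y) z = sa_join A x (sa_join A y z)) \<and>
     (\<forall>x\<in>sa_carrier A. \<forall>y\<in>sa_carrier A. sa_meet A x (sa_join A x y) = x) \<and>
     (\<forall>x\<in>sa_carrier A. \<forall>y\<in>sa_carrier A. sa_join A x (sa_meet A x y) = x) \<and>
     (\<forall>x\<in>sa_carrier A. \<forall>y\<in>sa_carrier A. \<forall>z\<in>sa_carrier A.
        sa_meet A x (sa_join A y z) = sa_join A (sa_meet A x y) (sa_meet A x z)) \<and>
     (\<forall>x\<in>sa_carrier A. \<forall>y\<in>sa_carrier A.
        sa_meet A x (sa_cmp A x) = sa_meet A y (sa_cmp A y)) \<and>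
     (\<forall>x\<in>sa_carrier A. \<forall>y\<in>sa_carrier A.
        sa_join A x (sa_cmp A x) = sa_join A y (sa_cmp A y))"

definition bool_endo :: "'a sa_alg \<Rightarrow> ('a \<Rightarrow> 'a) \<Rightarrow> bool" where
  "bool_endo A f \<longleftrightarrow>
     (\<forall>x\<in>sa_carrier A. f x \<in> sa_carrier A) \<and>
     (\<forall>x\<in>sa_carrier A. \<forall>y\<in>sa_carrier A. f (sa_meet A x y) = sa_meet A (f x) (f y)) \<and>
     (\<forall>x\<in>sa_carrier A. f (sa_cmp A x) = sa_cmp A (f x))"

datatype sa_letter = Sub nat nat | Swp nat nat

definition repl :: "nat \<Rightarrow> nat \<Rightarrow> nat \<Rightarrow> nat" where
  "repl i j = (\<lambda>k. if k = i then j else k)"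

definition transp :: "nat \<Rightarrow> nat \<Rightarrow> nat \<Rightarrow> nat" where
  "transp i j = (\<lambda>k. if k = i then j else if k = j then i else k)"

fun letter_map :: "sa_letter \<Rightarrow> nat \<Rightarrow> nat" where
  "letter_map (Sub i j) = repl i j"
| "letter_map (Swp i j) = transp i j"

fun letter_ok :: "nat \<Rightarrow> sa_letter \<Rightarrow> bool" where
  "letter_ok n (Sub i j) \<longleftrightarrow> i < n \<and> j < n \<and> i \<noteq> j"
| "letter_ok n (Swp i j) \<longleftrightarrow> i < n \<and> j < n \<and> i \<noteq> j"

text \<open>The word [l1, ..., lk] denotes the term l1(l2(...(lk x))); its associated map is
  the composition [l1] o ... o [lk] (matching the set-algebra semantics
  S(X) = {q. q o tau \<in> X}).\<close>
definition word_map :: "sa_letter list \<Rightarrow> nat \<Rightarrow> nat" where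
  "word_map w = foldr (\<lambda>l f. letter_map l \<circ> f) w id"

fun letter_op :: "'a sa_alg \<Rightarrow> sa_letter \<Rightarrow> 'a \<Rightarrow> 'a" where
  "letter_op A (Sub i j) = sa_sub A i j"
| "letter_op A (Swp i j) = sa_swp A i j"

definition word_eval :: "'a sa_alg \<Rightarrow> sa_letter list \<Rightarrow> 'a \<Rightarrow> 'a" where
  "word_eval A w x = foldr (\<lambda>l y. letter_op A l y) w x"

definition SA :: "nat \<Rightarrow> 'a sa_alg set" where
  "SA n = {A. boolean_alg A \<and>
     (\<forall>i j. i < n \<longrightarrow> j < n \<longrightarrow> i \<noteq> j \<longrightarrow>
        bool_endo A (sa_sub A i j) \<and> bool_endo A (sa_swp A i j)) \<and>
     (\<forall>w1 w2. (\<forall>l\<in>set w1. letter_ok n l) \<longrightarrow> (\<forall>l\<in>set w2. letter_ok n l) \<longrightarrow>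
        (\<forall>k<n. word_map w1 k = word_map w2 k) \<longrightarrow>
        (\<forall>x\<in>sa_carrier A. word_eval A w1 x = word_eval A w2 x))}"

definition is_filter :: "'a sa_alg \<Rightarrow> 'a set \<Rightarrow> bool" where
  "is_filter A F \<longleftrightarrow> F \<subseteq> sa_carrier A \<and> F \<noteq> {} \<and>
     (\<forall>x\<in>F. \<forall>y\<in>F. sa_meet A x y \<in> F) \<and>
     (\<forall>x\<in>F. \<forall>y\<in>sa_carrier A. sa_le A x y \<longrightarrow> y \<in> F)"

definition is_ultrafilter :: "'a sa_alg \<Rightarrow> 'a set \<Rightarrow> bool" where
  "is_ultrafilter A F \<longleftrightarrow> is_filter A F \<and> F \<noteq> sa_carrier A \<and>
     (\<forall>G. is_filter A G \<and> G \<noteq> sa_carrier A \<and> F \<subseteq> G \<longrightarrow> G = F)"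

definition Uf :: "'a sa_alg \<Rightarrow> 'a set set" where
  "Uf A = {F. is_ultrafilter A F}"

definition op_plus :: "'a sa_alg \<Rightarrow> ('a \<Rightarrow> 'a) \<Rightarrow> 'a set set \<Rightarrow> 'a set set" where
  "op_plus A f Y = {u \<in> Uf A. \<exists>w\<in>Y. \<forall>b\<in>w. f b \<in> u}"

definition canonical_ext :: "'a sa_alg \<Rightarrow> 'a set set sa_alg" where
  "canonical_ext A =
     \<lparr> sa_carrier = Pow (Uf A),
       sa_meet = (\<inter>),
       sa_cmp = (\<lambda>Y. Uf A - Y),
       sa_sub = (\<lambda>i j. op_plus A (sa_sub A i j)),
       sa_swp = (\<lambda>i j. op_plus A (sa_swp A i j)) \<rparr>"

definition dipermutable :: "nat \<Rightarrow> (nat \<Rightarrow> 'u) set \<Rightarrow> bool" where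
  "dipermutable n D \<longleftrightarrow> D \<subseteq> extensional {..<n} \<and>
     (\<forall>s\<in>D. \<forall>i j. i < n \<longrightarrow> j < n \<longrightarrow> i \<noteq> j \<longrightarrow>
        s \<circ> repl i j \<in> D \<and> s \<circ> transp i j \<in> D)"

definition is_inf :: "'b sa_alg \<Rightarrow> 'b set \<Rightarrow> 'b \<Rightarrow> bool" where
  "is_inf B Y x \<longleftrightarrow> x \<in> sa_carrier B \<and> (\<forall>y\<in>Y. sa_le B x y) \<and>
     (\<forall>z\<in>sa_carrier B. (\<forall>y\<in>Y. sa_le B z y) \<longrightarrow> sa_le B z x)"

definition complete_representation ::
  "nat \<Rightarrow> 'b sa_alg \<Rightarrow> (nat \<Rightarrow> 'u) set \<Rightarrow> ('b \<Rightarrow> (nat \<Rightarrow> 'u) set) \<Rightarrow> bool" where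
  "complete_representation n B D g \<longleftrightarrow>
     dipermutable n D \<and>
     inj_on g (sa_carrier B) \<and>
     (\<forall>x\<in>sa_carrier B. g x \<subseteq> D) \<and>
     (\<forall>x\<in>sa_carrier B. \<forall>y\<in>sa_carrier B. g (sa_meet B x y) = g x \<inter> g y) \<and>
     (\<forall>x\<in>sa_carrier B. g (sa_cmp B x) = D - g x) \<and>
     (\<forall>i j. i < n \<longrightarrow> j < n \<longrightarrow> i \<noteq> j \<longrightarrow> (\<forall>x\<in>sa_carrier B.
        g (sa_sub B i j x) = {q\<in>D. q \<circ> repl i j \<in> g x} \<and>
        g (sa_swp B i j x) = {q\<in>D. q \<circ> transp i j \<in> g x})) \<and>
     (\<forall>Y x. Y \<subseteq> sa_carrier B \<longrightarrow> is_inf B Y x \<longrightarrow> g x = D \<inter> (\<Inter>y\<in>Y. g y))"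

end

theory Submission
  imports Defs
begin

text \<open>A Boolean endomorphism \<open>f\<close> acts on ultrafilters by \<open>u \<mapsto> f\<^sup>-\<^sup>1[u]\<close>; since
  preimages of ultrafilters are ultrafilters and ultrafilters are maximal, \<open>f\<^sup>+(Y)\<close> is
  \<open>{u. f\<^sup>-\<^sup>1[u] \<in> Y}\<close>. Points of the representation are pairs of an ultrafilter \<open>u\<close> and a
  map \<open>\<tau> \<in> \<^sup>nn\<close> realised by a word \<open>w\<close>, labelled by the ultrafilter \<open>w\<^sup>-\<^sup>1[u]\<close>; the
  equations of \<open>SA\<^sub>n\<close> make this label depend only on \<open>\<tau>\<close>. Sending \<open>Y\<close> to the points
  whose label lies in \<open>Y\<close> preserves all intersections and complements, is injective
  (look at the empty word), and turns \<open>f\<^sup>+\<close> for a letter into precomposition with the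
  letter's map, because appending a letter to \<open>w\<close> composes \<open>\<tau>\<close> with that map.\<close>

section \<open>Boolean algebras on a carrier\<close>

locale boolean_sa =
  fixes A :: "'a sa_alg"
  assumes boolean: "boolean_alg A"
begin

abbreviation "carrier \<equiv> sa_carrier A"
abbreviation "meet \<equiv> sa_meet A"
abbreviation "cmp \<equiv> sa_cmp A"
abbreviation "join \<equiv> sa_join A"

lemma carrier_nonempty: "carrier \<noteq> {}"
  using boolean unfolding boolean_alg_def by (elim conjE) metis

lemma meet_closed [simp]: "x \<in> carrier \<Longrightarrow> y \<in> carrier \<Longrightarrow> meet x y \<in> carrier"
  using boolean unfolding boolean_alg_def by (elim conjE) metis

lemma cmp_closed [simp]: "x \<in> carrier \<Longrightarrow> cmp x \<in> carrier"
  using boolean unfolding boolean_alg_def by (elim conjE) metis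

lemma meet_comm: "x \<in> carrier \<Longrightarrow> y \<in> carrier \<Longrightarrow> meet x y = meet y x"
  using boolean unfolding boolean_alg_def by (elim conjE) metis

lemma meet_assoc: "x \<in> carrier \<Longrightarrow> y \<in> carrier \<Longrightarrow> z \<in> carrier \<Longrightarrow> meet (meet x y) z = meet x (meet y z)"
  using boolean unfolding boolean_alg_def by (elim conjE) metis

lemma meet_join_absorb: "x \<in> carrier \<Longrightarrow> y \<in> carrier \<Longrightarrow> meet x (join x y) = x"
  using boolean unfolding boolean_alg_def by (elim conjE) metis

lemma join_meet_absorb: "x \<in> carrier \<Longrightarrow> y \<in> carrier \<Longrightarrow> join x (meet x y) = x"
  using boolean unfolding boolean_alg_def by (elim conjE) metis

lemma meet_join_distrib: "x \<in> carrier \<Longrightarrow> y \<in> carrier \<Longrightarrow> z \<in> carrier \<Longrightarrow> meet x (join y z) = join (meet x y) (meet x z)"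
  using boolean unfolding boolean_alg_def by (elim conjE) metis

lemma meet_cmp_eq: "x \<in> carrier \<Longrightarrow> y \<in> carrier \<Longrightarrow> meet x (cmp x) = meet y (cmp y)"
  using boolean unfolding boolean_alg_def by (elim conjE) metis

lemma join_cmp_eq: "x \<in> carrier \<Longrightarrow> y \<in> carrier \<Longrightarrow> join x (cmp x) = join y (cmp y)"
  using boolean unfolding boolean_alg_def by (elim conjE) metis

definition bot_elem :: 'a where
  "bot_elem = meet (SOME x. x \<in> carrier) (cmp (SOME x. x \<in> carrier))"

definition top_elem :: 'a where
  "top_elem = join (SOME x. x \<in> carrier) (cmp (SOME x. x \<in> carrier))"

lemma some_in_carrier: "(SOME x. x \<in> carrier) \<in> carrier"
  using carrier_nonempty by (simp add: some_in_eq)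

lemma meet_cmp_self: "x \<in> carrier \<Longrightarrow> meet x (cmp x) = bot_elem"
  unfolding bot_elem_def by (rule meet_cmp_eq[OF _ some_in_carrier])

lemma join_cmp_self: "x \<in> carrier \<Longrightarrow> join x (cmp x) = top_elem"
  unfolding top_elem_def by (rule join_cmp_eq[OF _ some_in_carrier])

lemma bot_closed [simp]: "bot_elem \<in> carrier"
  using meet_cmp_self some_in_carrier by (metis cmp_closed meet_closed)

lemma meet_idem: "x \<in> carrier \<Longrightarrow> meet x x = x"
  using meet_join_absorb[of x "meet x x"] join_meet_absorb[of x x] by simp

lemma join_idem: "x \<in> carrier \<Longrightarrow> join x x = x"
  using join_meet_absorb[of x x] meet_idem by simp

lemma meet_top: "x \<in> carrier \<Longrightarrow> meet x top_elem = x"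
  using meet_join_absorb[of x "cmp x"] join_cmp_self by simp

lemma bot_meet: "x \<in> carrier \<Longrightarrow> meet bot_elem x = bot_elem"
proof -
  assume x: "x \<in> carrier"
  have "meet (meet x (cmp x)) x = meet x (meet x (cmp x))"
    using x by (simp add: meet_comm)
  also have "\<dots> = meet x (cmp x)"
    using x by (simp flip: meet_assoc add: meet_idem)
  finally show ?thesis using meet_cmp_self[OF x] by simp
qed

lemma meet_bot: "x \<in> carrier \<Longrightarrow> meet x bot_elem = bot_elem"
  using bot_meet meet_comm by simp

lemma le_bot_eq: "x \<in> carrier \<Longrightarrow> sa_le A x bot_elem \<Longrightarrow> x = bot_elem"
  unfolding sa_le_def using meet_bot by simp

lemma bot_unique:
  assumes "p \<in> carrier" "x \<in> carrier" "meet p x = bot_elem" "meet p (cmp x) = bot_elem"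
  shows "p = bot_elem"
proof -
  have "p = meet p (join x (cmp x))" using assms(1,2) by (simp add: join_cmp_self meet_top)
  also have "\<dots> = join bot_elem bot_elem" using assms by (simp add: meet_join_distrib)
  finally show ?thesis by (simp add: join_idem)
qed

lemma meet_le_left: "x \<in> carrier \<Longrightarrow> y \<in> carrier \<Longrightarrow> sa_le A (meet x y) x"
  unfolding sa_le_def by (metis meet_assoc meet_comm meet_idem)

lemma meet_le_right: "x \<in> carrier \<Longrightarrow> y \<in> carrier \<Longrightarrow> sa_le A (meet x y) y"
  unfolding sa_le_def by (simp add: meet_assoc meet_idem)

lemma le_trans:
  "x \<in> carrier \<Longrightarrow> y \<in> carrier \<Longrightarrow> z \<in> carrier \<Longrightarrow> sa_le A x y \<Longrightarrow> sa_le A y z \<Longrightarrow> sa_le A x z"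
  unfolding sa_le_def by (metis meet_assoc)

lemma le_meetI:
  "p \<in> carrier \<Longrightarrow> x \<in> carrier \<Longrightarrow> y \<in> carrier \<Longrightarrow> sa_le A p x \<Longrightarrow> sa_le A p y \<Longrightarrow> sa_le A p (meet x y)"
  unfolding sa_le_def by (metis meet_assoc)

lemma meet_mono:
  "x \<in> carrier \<Longrightarrow> x' \<in> carrier \<Longrightarrow> y \<in> carrier \<Longrightarrow> sa_le A x x' \<Longrightarrow> sa_le A (meet x y) (meet x' y)"
  by (meson le_meetI le_trans meet_closed meet_le_left meet_le_right)

section \<open>Ultrafilters\<close>

lemma filter_subset: "is_filter A F \<Longrightarrow> F \<subseteq> carrier"
  unfolding is_filter_def by blast

lemma filter_meet: "is_filter A F \<Longrightarrow> x \<in> F \<Longrightarrow> y \<in> F \<Longrightarrow> meet x y \<in> F"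
  unfolding is_filter_def by blast

lemma filter_up: "is_filter A F \<Longrightarrow> x \<in> F \<Longrightarrow> y \<in> carrier \<Longrightarrow> sa_le A x y \<Longrightarrow> y \<in> F"
  unfolding is_filter_def by blast

lemma filter_bot_eq_carrier: "is_filter A F \<Longrightarrow> bot_elem \<in> F \<Longrightarrow> F = carrier"
  using filter_subset filter_up bot_meet unfolding sa_le_def by blast

lemma ultrafilter_filter: "is_ultrafilter A u \<Longrightarrow> is_filter A u"
  unfolding is_ultrafilter_def by blast

lemma ultrafilter_bot: "is_ultrafilter A u \<Longrightarrow> bot_elem \<notin> u"
  unfolding is_ultrafilter_def using filter_bot_eq_carrier by blast

lemma ultrafilter_proper: "is_ultrafilter A u \<Longrightarrow> u \<noteq> carrier"
  unfolding is_ultrafilter_def by blast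

lemma ultrafilter_maximal:
  "is_ultrafilter A u \<Longrightarrow> is_filter A F \<Longrightarrow> u \<subseteq> F \<Longrightarrow> F \<noteq> carrier \<Longrightarrow> F = u"
  unfolding is_ultrafilter_def by blast

definition filter_extend :: "'a set \<Rightarrow> 'a \<Rightarrow> 'a set" where
  "filter_extend F y = {z \<in> carrier. \<exists>a\<in>F. sa_le A (meet a y) z}"

lemma filter_extend:
  assumes F: "is_filter A F" and y: "y \<in> carrier"
  shows "is_filter A (filter_extend F y)" "F \<subseteq> filter_extend F y" "y \<in> filter_extend F y"
proof -
  have FC: "F \<subseteq> carrier" using filter_subset[OF F] .
  show sub: "F \<subseteq> filter_extend F y"
    unfolding filter_extend_def using FC y meet_le_left by blast
  obtain a0 where "a0 \<in> F" using F unfolding is_filter_def by blast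
  then show y_mem: "y \<in> filter_extend F y"
    unfolding filter_extend_def using FC y meet_le_right by blast
  show "is_filter A (filter_extend F y)"
    unfolding is_filter_def
  proof (intro conjI ballI impI)
    show "filter_extend F y \<subseteq> carrier" unfolding filter_extend_def by blast
    show "filter_extend F y \<noteq> {}" using y_mem by blast
  next
    fix z1 z2 assume "z1 \<in> filter_extend F y" "z2 \<in> filter_extend F y"
    then obtain a1 a2 where a: "a1 \<in> F" "a2 \<in> F" and z: "z1 \<in> carrier" "z2 \<in> carrier"
      and le: "sa_le A (meet a1 y) z1" "sa_le A (meet a2 y) z2"
      unfolding filter_extend_def by blast
    have aC: "a1 \<in> carrier" "a2 \<in> carrier" using a FC by blast+
    have "sa_le A (meet (meet a1 a2) y) z1"
      using le_trans[OF _ _ _ meet_mono[OF _ _ y meet_le_left] le(1)] aC z y by simp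
    moreover have "sa_le A (meet (meet a1 a2) y) z2"
      using le_trans[OF _ _ _ meet_mono[OF _ _ y meet_le_right] le(2)] aC z y by simp
    ultimately have "sa_le A (meet (meet a1 a2) y) (meet z1 z2)"
      using aC z y le_meetI by simp
    then show "meet z1 z2 \<in> filter_extend F y"
      unfolding filter_extend_def using filter_meet[OF F a] z by auto
  next
    fix z1 z2 assume "z1 \<in> filter_extend F y" and z2: "z2 \<in> carrier" and le: "sa_le A z1 z2"
    then obtain a where a: "a \<in> F" and z1: "z1 \<in> carrier" and "sa_le A (meet a y) z1"
      unfolding filter_extend_def by blast
    moreover have "meet a y \<in> carrier" using a FC y by auto
    ultimately have "sa_le A (meet a y) z2" using le_trans z2 le by blast
    then show "z2 \<in> filter_extend F y"
      unfolding filter_extend_def using a z2 by blast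
  qed
qed

lemma ultrafilter_cmp:
  assumes u: "is_ultrafilter A u" and x: "x \<in> carrier" and "x \<notin> u"
  shows "cmp x \<in> u"
proof (rule ccontr)
  assume "cmp x \<notin> u"
  have F: "is_filter A u" using ultrafilter_filter[OF u] .
  have witness: "\<exists>a\<in>u. meet a y = bot_elem" if y: "y \<in> carrier" "y \<notin> u" for y
  proof -
    have "filter_extend u y = carrier"
      using filter_extend[OF F y(1)] ultrafilter_maximal[OF u] y(2) by blast
    then have "bot_elem \<in> filter_extend u y" by simp
    then obtain a where "a \<in> u" "sa_le A (meet a y) bot_elem"
      unfolding filter_extend_def by blast
    then show ?thesis using filter_subset[OF F] y le_bot_eq by (meson meet_closed subsetD)
  qed
  obtain a b where ab: "a \<in> u" "b \<in> u" "meet a x = bot_elem" "meet b (cmp x) = bot_elem"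
    using witness[OF x \<open>x \<notin> u\<close>] witness[OF cmp_closed[OF x] \<open>cmp x \<notin> u\<close>] by blast
  have abC: "a \<in> carrier" "b \<in> carrier" using ab filter_subset[OF F] by blast+
  have "meet (meet a b) x = meet b (meet a x)"
    using abC x by (simp add: meet_comm[of a b] meet_assoc)
  then have "meet (meet a b) x = bot_elem" using ab(3) meet_bot[OF abC(2)] by simp
  moreover have "meet (meet a b) (cmp x) = bot_elem"
    using ab(4) meet_assoc[OF abC cmp_closed[OF x]] meet_bot[OF abC(1)] by simp
  ultimately have "meet a b = bot_elem"
    by (rule bot_unique[OF meet_closed[OF abC] x])
  then show False
    using filter_meet[OF F ab(1,2)] ultrafilter_bot[OF u] by simp
qed

lemma bool_endo_bot: "bool_endo A f \<Longrightarrow> f bot_elem = bot_elem"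
  unfolding bool_endo_def using some_in_carrier meet_cmp_self by (metis cmp_closed)

lemma preimage_ultrafilter:
  assumes f: "bool_endo A f" and u: "is_ultrafilter A u"
  shows "is_ultrafilter A {x \<in> carrier. f x \<in> u}" (is "is_ultrafilter A ?P")
proof -
  have F: "is_filter A u" using ultrafilter_filter[OF u] .
  have f_closed: "\<And>x. x \<in> carrier \<Longrightarrow> f x \<in> carrier"
    and f_meet: "\<And>x y. x \<in> carrier \<Longrightarrow> y \<in> carrier \<Longrightarrow> f (meet x y) = meet (f x) (f y)"
    and f_cmp: "\<And>x. x \<in> carrier \<Longrightarrow> f (cmp x) = cmp (f x)"
    using f unfolding bool_endo_def by blast+
  have cmp_mem: "cmp x \<in> ?P" if "x \<in> carrier" "x \<notin> ?P" for x
    using that ultrafilter_cmp[OF u f_closed] f_cmp by simp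
  have P_filter: "is_filter A ?P"
    unfolding is_filter_def
  proof (intro conjI ballI impI)
    show "?P \<subseteq> carrier" by blast
    show "?P \<noteq> {}" using some_in_carrier cmp_mem by blast
  next
    fix x y assume "x \<in> ?P" "y \<in> ?P"
    then show "meet x y \<in> ?P" using f_meet filter_meet[OF F] by auto
  next
    fix x y assume x: "x \<in> ?P" and y: "y \<in> carrier" and "sa_le A x y"
    then have "sa_le A (f x) (f y)" unfolding sa_le_def using f_meet by (metis mem_Collect_eq)
    then show "y \<in> ?P" using filter_up[OF F] x y f_closed by blast
  qed
  have "bot_elem \<notin> ?P" using bool_endo_bot[OF f] ultrafilter_bot[OF u] by simp
  then have P_proper: "?P \<noteq> carrier" using bot_closed by blast
  have P_maximal: "\<forall>G. is_filter A G \<and> G \<noteq> carrier \<and> ?P \<subseteq> G \<longrightarrow> G = ?P"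
  proof (intro allI impI)
    fix G assume G: "is_filter A G \<and> G \<noteq> carrier \<and> ?P \<subseteq> G"
    have "y \<in> ?P" if "y \<in> G" for y
    proof (rule ccontr)
      assume "y \<notin> ?P"
      moreover have y: "y \<in> carrier" using that filter_subset G by blast
      ultimately have "cmp y \<in> G" using cmp_mem G by blast
      then have "bot_elem \<in> G" using filter_meet[of G y "cmp y"] G that meet_cmp_self[OF y] by metis
      then show False using filter_bot_eq_carrier G by blast
    qed
    then show "G = ?P" using G by blast
  qed
  show ?thesis unfolding is_ultrafilter_def using P_filter P_proper P_maximal by (intro conjI)
qed

lemma mem_op_plus_iff:
  assumes f: "bool_endo A f" and u: "is_ultrafilter A u" and Y: "Y \<subseteq> Uf A"
  shows "u \<in> op_plus A f Y \<longleftrightarrow> {x \<in> carrier. f x \<in> u} \<in> Y"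
proof
  assume "{x \<in> carrier. f x \<in> u} \<in> Y"
  then show "u \<in> op_plus A f Y"
    unfolding op_plus_def Uf_def using u by (intro CollectI conjI bexI) auto
next
  assume "u \<in> op_plus A f Y"
  then obtain w where w: "w \<in> Y" "\<forall>b\<in>w. f b \<in> u" unfolding op_plus_def by blast
  then have w_uf: "is_ultrafilter A w" using Y unfolding Uf_def by blast
  have P: "is_ultrafilter A {x \<in> carrier. f x \<in> u}" using preimage_ultrafilter[OF f u] .
  have "w \<subseteq> {x \<in> carrier. f x \<in> u}"
    using w(2) filter_subset[OF ultrafilter_filter[OF w_uf]] by blast
  then have "{x \<in> carrier. f x \<in> u} = w"
    by (rule ultrafilter_maximal[OF w_uf ultrafilter_filter[OF P] _ ultrafilter_proper[OF P]])
  then show "{x \<in> carrier. f x \<in> u} \<in> Y" using w(1) by simp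
qed

end

section \<open>The representation of the canonical extension\<close>

definition words :: "nat \<Rightarrow> sa_letter list set" where
  "words n = lists {l. letter_ok n l}"

lemma SA_boolean_alg: "A \<in> SA n \<Longrightarrow> boolean_alg A"
  unfolding SA_def by blast

lemma SA_bool_endo_letter: "A \<in> SA n \<Longrightarrow> letter_ok n l \<Longrightarrow> bool_endo A (letter_op A l)"
  unfolding SA_def by (cases l) auto

lemma SA_word_eval_eq:
  assumes "A \<in> SA n" "w1 \<in> words n" "w2 \<in> words n" "\<forall>k<n. word_map w1 k = word_map w2 k"
    and "x \<in> sa_carrier A"
  shows "word_eval A w1 x = word_eval A w2 x"
proof -
  have "\<forall>l\<in>set w1. letter_ok n l" "\<forall>l\<in>set w2. letter_ok n l"
    using assms(2,3) by (auto simp: words_def)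
  then show ?thesis
    using assms(1,4,5) unfolding SA_def by (simp only: mem_Collect_eq)
qed

lemma word_eval_Cons: "word_eval A (l # w) = (\<lambda>x. letter_op A l (word_eval A w x))"
  unfolding word_eval_def by (simp add: comp_def)

lemma word_eval_snoc: "word_eval A (w @ [l]) x = word_eval A w (letter_op A l x)"
  unfolding word_eval_def by simp

lemma bool_endo_comp: "bool_endo A f \<Longrightarrow> bool_endo A g \<Longrightarrow> bool_endo A (\<lambda>x. f (g x))"
  unfolding bool_endo_def by simp

lemma SA_bool_endo_word: "A \<in> SA n \<Longrightarrow> w \<in> words n \<Longrightarrow> bool_endo A (word_eval A w)"
proof (induction w)
  case Nil
  then show ?case by (simp add: bool_endo_def word_eval_def)
next
  case (Cons l w)
  then have "letter_ok n l" "w \<in> words n" by (simp_all add: words_def)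
  then show ?case
    unfolding word_eval_Cons using Cons bool_endo_comp SA_bool_endo_letter by blast
qed

lemma word_map_snoc: "word_map (w @ [l]) = word_map w \<circ> letter_map l"
proof -
  have "foldr (\<lambda>l f. letter_map l \<circ> f) w g = word_map w \<circ> g" for g
    by (induction w) (simp_all add: word_map_def comp_assoc)
  then show ?thesis by (simp add: word_map_def)
qed

lemma letter_map_less: "letter_ok n l \<Longrightarrow> k < n \<Longrightarrow> letter_map l k < n"
  by (cases l) (auto simp: repl_def transp_def)

lemma letter_map_fixes: "letter_ok n l \<Longrightarrow> \<not> k < n \<Longrightarrow> letter_map l k = k"
  by (cases l) (auto simp: repl_def transp_def)

text \<open>The point \<open>(u, word_map w)\<close> as an \<open>n\<close>-tuple over the base set \<open>'b set \<times> nat\<close>: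
  the ultrafilter is repeated, as a singleton, in every coordinate, so it can be read off
  any of them.\<close>
definition word_point :: "nat \<Rightarrow> 'b \<Rightarrow> sa_letter list \<Rightarrow> nat \<Rightarrow> 'b set \<times> nat" where
  "word_point n u w = (\<lambda>k. if k < n then ({u}, word_map w k) else undefined)"

definition rep_base :: "nat \<Rightarrow> 'a sa_alg \<Rightarrow> (nat \<Rightarrow> 'a set set \<times> nat) set" where
  "rep_base n A = {word_point n u w | u w. u \<in> Uf A \<and> w \<in> words n}"

definition rep_label :: "nat \<Rightarrow> 'a sa_alg \<Rightarrow> (nat \<Rightarrow> 'a set set \<times> nat) \<Rightarrow> 'a set" where
  "rep_label n A q =
     {x \<in> sa_carrier A. \<exists>u w. w \<in> words n \<and> q = word_point n u w \<and> word_eval A w x \<in> u}"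

definition rep_map :: "nat \<Rightarrow> 'a sa_alg \<Rightarrow> 'a set set \<Rightarrow> (nat \<Rightarrow> 'a set set \<times> nat) set" where
  "rep_map n A Y = {q \<in> rep_base n A. rep_label n A q \<in> Y}"

lemma word_point_inject:
  "0 < n \<Longrightarrow> word_point n u w = word_point n u' w' \<Longrightarrow> u = u' \<and> (\<forall>k<n. word_map w k = word_map w' k)"
  unfolding word_point_def by (metis (mono_tags) fst_conv singleton_inject snd_conv)

lemma word_point_comp_letter:
  "letter_ok n l \<Longrightarrow> word_point n u w \<circ> letter_map l = word_point n u (w @ [l])"
  by (auto simp: word_point_def word_map_snoc letter_map_less letter_map_fixes)

lemma rep_label_word_point:
  assumes A: "A \<in> SA n" and "0 < n" and w: "w \<in> words n"
  shows "rep_label n A (word_point n u w) = {x \<in> sa_carrier A. word_eval A w x \<in> u}"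
proof (intro set_eqI iffI)
  fix x assume "x \<in> rep_label n A (word_point n u w)"
  then obtain u' w' where x: "x \<in> sa_carrier A" and w': "w' \<in> words n"
    and eq: "word_point n u w = word_point n u' w'" and mem: "word_eval A w' x \<in> u'"
    unfolding rep_label_def by blast
  have "word_eval A w' x = word_eval A w x"
    using SA_word_eval_eq[OF A w' w _ x] word_point_inject[OF \<open>0 < n\<close> eq] by simp
  then show "x \<in> {x \<in> sa_carrier A. word_eval A w x \<in> u}"
    using x mem word_point_inject[OF \<open>0 < n\<close> eq] by simp
next
  fix x assume "x \<in> {x \<in> sa_carrier A. word_eval A w x \<in> u}"
  then show "x \<in> rep_label n A (word_point n u w)" unfolding rep_label_def using w by blast
qed

lemma rep_base_comp_letter:
  assumes q: "q \<in> rep_base n A" and l: "letter_ok n l"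
  shows "q \<circ> letter_map l \<in> rep_base n A"
proof -
  obtain u w where "q = word_point n u w" and u: "u \<in> Uf A" and w: "w \<in> words n"
    using q unfolding rep_base_def by blast
  then have "q \<circ> letter_map l = word_point n u (w @ [l])" using word_point_comp_letter[OF l] by simp
  moreover have "w @ [l] \<in> words n" using w l by (simp add: words_def)
  ultimately show ?thesis unfolding rep_base_def using u by blast
qed

lemma rep_label_comp_letter:
  assumes A: "A \<in> SA n" and "0 < n" and q: "q \<in> rep_base n A" and l: "letter_ok n l"
  shows "rep_label n A (q \<circ> letter_map l) = {x \<in> sa_carrier A. letter_op A l x \<in> rep_label n A q}"
proof -
  obtain u w where q_def: "q = word_point n u w" and w: "w \<in> words n"
    using q unfolding rep_base_def by blast
  have "w @ [l] \<in> words n" using w l by (simp add: words_def)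
  then show ?thesis
    using rep_label_word_point[OF A \<open>0 < n\<close>] w SA_bool_endo_letter[OF A l]
    by (auto simp: q_def word_point_comp_letter[OF l] word_eval_snoc bool_endo_def)
qed

lemma rep_label_Uf:
  assumes A: "A \<in> SA n" and "0 < n" and q: "q \<in> rep_base n A"
  shows "rep_label n A q \<in> Uf A"
proof -
  obtain u w where q_def: "q = word_point n u w" and u: "u \<in> Uf A" and w: "w \<in> words n"
    using q unfolding rep_base_def by blast
  interpret boolean_sa A using SA_boolean_alg[OF A] by unfold_locales
  show ?thesis
    using preimage_ultrafilter[OF SA_bool_endo_word[OF A w]] u
    by (simp add: q_def rep_label_word_point[OF A \<open>0 < n\<close> w] Uf_def)
qed

lemma dipermutable_rep_base: "dipermutable n (rep_base n A)"
  unfolding dipermutable_def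
proof (intro conjI ballI allI impI)
  show "rep_base n A \<subseteq> extensional {..<n}"
    unfolding rep_base_def word_point_def extensional_def by auto
next
  fix s i j assume "s \<in> rep_base n A" "i < n" "j < n" "i \<noteq> j"
  then show "s \<circ> repl i j \<in> rep_base n A" "s \<circ> transp i j \<in> rep_base n A"
    using rep_base_comp_letter[of s n A "Sub i j"] rep_base_comp_letter[of s n A "Swp i j"] by auto
qed

lemma rep_map_op_plus:
  assumes A: "A \<in> SA n" and "0 < n" and l: "letter_ok n l" and Y: "Y \<subseteq> Uf A"
  shows "rep_map n A (op_plus A (letter_op A l) Y) = {q \<in> rep_base n A. q \<circ> letter_map l \<in> rep_map n A Y}"
proof -
  interpret boolean_sa A using SA_boolean_alg[OF A] by unfold_locales
  have "rep_label n A q \<in> op_plus A (letter_op A l) Y \<longleftrightarrow> rep_label n A (q \<circ> letter_map l) \<in> Y"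
    if "q \<in> rep_base n A" for q
    using mem_op_plus_iff[OF SA_bool_endo_letter[OF A l] _ Y] rep_label_Uf[OF A \<open>0 < n\<close> that]
      rep_label_comp_letter[OF A \<open>0 < n\<close> that l] by (simp add: Uf_def)
  then show ?thesis unfolding rep_map_def using rep_base_comp_letter[OF _ l] by auto
qed

lemma inj_on_rep_map:
  assumes A: "A \<in> SA n" and "0 < n"
  shows "inj_on (rep_map n A) (Pow (Uf A))"
proof (rule inj_onI)
  fix Y Z assume Y: "Y \<in> Pow (Uf A)" and Z: "Z \<in> Pow (Uf A)" and eq: "rep_map n A Y = rep_map n A Z"
  interpret boolean_sa A using SA_boolean_alg[OF A] by unfold_locales
  have "u \<in> Y \<longleftrightarrow> u \<in> Z" if u: "u \<in> Uf A" for u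
  proof -
    have "[] \<in> words n" by (simp add: words_def)
    then have "word_point n u [] \<in> rep_base n A" unfolding rep_base_def using u by blast
    moreover have "rep_label n A (word_point n u []) = u"
      using rep_label_word_point[OF A \<open>0 < n\<close> \<open>[] \<in> words n\<close>] u
        filter_subset[OF ultrafilter_filter] by (auto simp: Uf_def word_eval_def)
    ultimately have "word_point n u [] \<in> rep_map n A X \<longleftrightarrow> u \<in> X" for X
      unfolding rep_map_def by simp
    then show ?thesis using eq by metis
  qed
  then show "Y = Z" using Y Z by blast
qed

lemma is_inf_canonical_ext:
  assumes "is_inf (canonical_ext A) Y x"
  shows "x = Uf A \<inter> \<Inter>Y"
proof -
  have "x \<subseteq> Uf A" "\<forall>y\<in>Y. x \<subseteq> y" "\<forall>z\<subseteq>Uf A. (\<forall>y\<in>Y. z \<subseteq> y) \<longrightarrow> z \<subseteq> x"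
    using assms unfolding is_inf_def sa_le_def canonical_ext_def by (simp_all add: le_iff_inf[symmetric])
  then show ?thesis by blast
qed

lemma complete_representation_rep_map:
  assumes A: "A \<in> SA n" and "0 < n"
  shows "complete_representation n (canonical_ext A) (rep_base n A) (rep_map n A)"
  unfolding complete_representation_def
proof (intro conjI ballI allI impI)
  have car: "sa_carrier (canonical_ext A) = Pow (Uf A)" by (simp add: canonical_ext_def)
  show "dipermutable n (rep_base n A)" by (rule dipermutable_rep_base)
  show "inj_on (rep_map n A) (sa_carrier (canonical_ext A))"
    using inj_on_rep_map[OF A \<open>0 < n\<close>] car by simp
  show "rep_map n A X \<subseteq> rep_base n A" for X
    unfolding rep_map_def by blast
  show "rep_map n A (sa_meet (canonical_ext A) X Z) = rep_map n A X \<inter> rep_map n A Z" for X Z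
    by (auto simp: rep_map_def canonical_ext_def)
  show "rep_map n A (sa_cmp (canonical_ext A) X) = rep_base n A - rep_map n A X" for X
    using rep_label_Uf[OF A \<open>0 < n\<close>] by (auto simp: rep_map_def canonical_ext_def)
  fix i j x assume ij: "i < n" "j < n" "i \<noteq> j" and x: "x \<in> sa_carrier (canonical_ext A)"
  show "rep_map n A (sa_sub (canonical_ext A) i j x) = {q \<in> rep_base n A. q \<circ> repl i j \<in> rep_map n A x}"
    using rep_map_op_plus[OF A \<open>0 < n\<close>, of "Sub i j" x] ij x car by (simp add: canonical_ext_def)
  show "rep_map n A (sa_swp (canonical_ext A) i j x) = {q \<in> rep_base n A. q \<circ> transp i j \<in> rep_map n A x}"
    using rep_map_op_plus[OF A \<open>0 < n\<close>, of "Swp i j" x] ij x car by (simp add: canonical_ext_def)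
next
  fix Y x assume "is_inf (canonical_ext A) Y x"
  then have "x = Uf A \<inter> \<Inter>Y" by (rule is_inf_canonical_ext)
  then show "rep_map n A x = rep_base n A \<inter> (\<Inter>y\<in>Y. rep_map n A y)"
    using rep_label_Uf[OF A \<open>0 < n\<close>] unfolding rep_map_def by auto
qed

theorem theorem4p17:
  fixes n :: nat and A :: "'a sa_alg"
  assumes "2 \<le> n" and "A \<in> SA n"
  shows "\<exists>(D :: (nat \<Rightarrow> 'a set set \<times> nat) set) g.
           complete_representation n (canonical_ext A) D g"
  using complete_representation_rep_map[OF assms(2)] assms(1) by auto

end
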